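(* Let $n,k$ be positive integers and $X$ a nonempty subset of $[n]$. Let $Q\colon\mathbb{F}_2^{\binom{[n]}{\leq 2}}\to\mathbb{Z}_{2^k}$ be a $k$-integer polynomial of degree $d\geq 1$, written as $Q(x)=\alpha+\sum_{F\in\binom{\binom{[n]}{\leq 2}}{\leq d}}\lambda_F\prod_{e\in F}x(e)\bmod 2^k$, and let $\boldsymbol\lambda=\langle\lambda_F\rangle$ be its coefficients in this representation. Let $V$ be a block HJ-subspace of $\mathbb{F}_2^{\binom{[n]}{\leq 2}}$ of dimension $m$ with wildcard sets $(I_1,\dots,I_m)$ and associated embedding $e_V\colon\mathbb{F}_2^{\binom{[m]}{\leq 2}}\to V$. Assume (i) $\boldsymbol\lambda$ is canonical in $X$, and (ii) for every $i\in[m]$, $I_i\subseteq X$ and $|I_i|=(d+1)!\,2^k$. Then $\deg(Q\circ e_V)<\deg(Q)$.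
   Context: $\binom{S}{\leq j}$ denotes the set of nonempty subsets of $S$ with at most $j$ elements; $\mathbb{Z}_{2^k}=\mathbb{Z}/2^k\mathbb{Z}$. Integer polynomial: $Q\colon\mathbb{F}_2^{\binom{[n]}{\leq 2}}\to\mathbb{Z}_{2^k}$ is a $k$-integer polynomial of degree at most $d$ if $Q(x)=\alpha+\sum_{F}\lambda_F\prod_{e\in F}x(e)\bmod 2^k$, summing over $F\in\binom{\binom{[n]}{\leq 2}}{\leq d}$, with $\alpha,\lambda_F\in\mathbb{Z}_{2^k}$, $x(e)\in\{0,1\}\subseteq\mathbb{Z}_{2^k}$; its degree is the least such $d$. HJ-subspaces: let $n\geq m\geq 1$ and $\boldsymbol{I}=(I_1,\dots,I_m)$ pairwise disjoint nonempty subsets of $[n]$ with $\min I_1<\dots<\min I_m$. For $q\in\binom{[m]}{\leq 2}$ let $b_q$ be the indicator of $\{p\in\binom{[n]}{\leq 2}: p\subseteq\bigcup_{i\in q}I_i,\ p\cap I_i\neq\emptyset\ \forall i\in q\}$, and $\mathrm{Id}_{\boldsymbol I}(x)=\sum_q x(q)b_q$. An HJ-embedding is $e=\mathrm{Id}_{\boldsymbol I}+c$ with $c\in\mathbb{F}_2^{\binom{[n]}{\leq 2}}$ vanishing on $\binom{I_1\cup\dots\cup I_m}{\leq 2}$; its image $V$ is an HJ-subspace of dimension $m$ with wildcard sets $\boldsymbol I$ and $e_V:=e$. $V$ is block if $\max I_i<\min I_{i+1}$ for all $i<m$. Type and canonical: for a nonempty set $F$ of nonempty subsets of $[n]$, writing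 $\bigcup F=\{u_1<\dots<u_\ell\}$, $\tau(F)=\{S\subseteq[\ell]:\{u_i:i\in S\}\in F\}$. The collection $\boldsymbol\lambda$ is canonical in $X$ if $\lambda_{F_1}=\lambda_{F_2}$ whenever $F_1,F_2\in\binom{\binom{X}{\leq 2}}{\leq d}$ and $\tau(F_1)=\tau(F_2)$. *)

theory Defs
  imports Main "HOL-Number_Theory.Cong"
begin

definition le_subsets :: "'a set \<Rightarrow> nat \<Rightarrow> 'a set set" where
  "le_subsets S j = {A. A \<subseteq> S \<and> A \<noteq> {} \<and> finite A \<and> card A \<le> j}"

definition edges :: "nat \<Rightarrow> nat set set" where
  "edges n = le_subsets {1..n} 2"

(* A point x of F_2^{binom([n],<=2)} is represented by its support, a subset of edges n;
   x(e) = 1 iff e \<in> x, so prod_{e in F} x(e) = 1 iff F \<subseteq> x.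
   Values in Z_{2^k} are represented by integers, compared modulo 2^k. *)
definition int_poly_rep ::
  "nat \<Rightarrow> nat \<Rightarrow> nat \<Rightarrow> (nat set set \<Rightarrow> int) \<Rightarrow> int \<Rightarrow> (nat set set \<Rightarrow> int) \<Rightarrow> bool" where
  "int_poly_rep n k d Q \<alpha> lam \<longleftrightarrow>
     (\<forall>x. x \<subseteq> edges n \<longrightarrow>
        [Q x = \<alpha> + (\<Sum>F\<in>le_subsets (edges n) d. lam F * (if F \<subseteq> x then 1 else 0))] (mod 2^k))"

definition is_int_poly :: "nat \<Rightarrow> nat \<Rightarrow> nat \<Rightarrow> (nat set set \<Rightarrow> int) \<Rightarrow> bool" where
  "is_int_poly n k d Q \<longleftrightarrow> (\<exists>\<alpha> lam. int_poly_rep n k d Q \<alpha> lam)"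

definition int_poly_deg :: "nat \<Rightarrow> nat \<Rightarrow> (nat set set \<Rightarrow> int) \<Rightarrow> nat" where
  "int_poly_deg n k Q = (LEAST d. is_int_poly n k d Q)"

definition hj_b :: "nat \<Rightarrow> (nat \<Rightarrow> nat set) \<Rightarrow> nat set \<Rightarrow> nat set set" where
  "hj_b n I q = {p \<in> edges n. p \<subseteq> (\<Union>i\<in>q. I i) \<and> (\<forall>i\<in>q. p \<inter> I i \<noteq> {})}"

(* Id_I(x) = sum_q x(q) b_q over F_2 *)
definition hj_Id :: "nat \<Rightarrow> (nat \<Rightarrow> nat set) \<Rightarrow> nat set set \<Rightarrow> nat set set" where
  "hj_Id n I x = {p \<in> edges n. odd (card {q \<in> x. p \<in> hj_b n I q})}"

(* the embedding e = Id_I + c (addition in F_2 = symmetric difference of supports) *)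
definition hj_emb :: "nat \<Rightarrow> (nat \<Rightarrow> nat set) \<Rightarrow> nat set set \<Rightarrow> nat set set \<Rightarrow> nat set set" where
  "hj_emb n I c x = (hj_Id n I x - c) \<union> (c - hj_Id n I x)"

definition hj_data :: "nat \<Rightarrow> nat \<Rightarrow> (nat \<Rightarrow> nat set) \<Rightarrow> nat set set \<Rightarrow> bool" where
  "hj_data n m I c \<longleftrightarrow>
     1 \<le> m \<and> m \<le> n \<and>
     (\<forall>i\<in>{1..m}. I i \<noteq> {} \<and> I i \<subseteq> {1..n}) \<and>
     (\<forall>i\<in>{1..m}. \<forall>j\<in>{1..m}. i \<noteq> j \<longrightarrow> I i \<inter> I j = {}) \<and>
     (\<forall>i. 1 \<le> i \<and> i < m \<longrightarrow> Min (I i) < Min (I (Suc i))) \<and>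
     c \<subseteq> edges n \<and>
     c \<inter> le_subsets (\<Union>i\<in>{1..m}. I i) 2 = {}"

definition hj_block :: "nat \<Rightarrow> nat \<Rightarrow> (nat \<Rightarrow> nat set) \<Rightarrow> nat set set \<Rightarrow> bool" where
  "hj_block n m I c \<longleftrightarrow> hj_data n m I c \<and>
     (\<forall>i. 1 \<le> i \<and> i < m \<longrightarrow> Max (I i) < Min (I (Suc i)))"

definition hj_type :: "nat set set \<Rightarrow> nat set set" where
  "hj_type F = (let U = \<Union>F; u = (\<lambda>i. sorted_list_of_set U ! (i - 1))
                in {S. S \<subseteq> {1..card U} \<and> u ` S \<in> F})"

definition canonical_in :: "nat \<Rightarrow> nat \<Rightarrow> nat set \<Rightarrow> (nat set set \<Rightarrow> int) \<Rightarrow> bool" where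
  "canonical_in k d X lam \<longleftrightarrow>
     (\<forall>F1 F2. F1 \<in> le_subsets (le_subsets X 2) d \<longrightarrow> F2 \<in> le_subsets (le_subsets X 2) d \<longrightarrow>
        hj_type F1 = hj_type F2 \<longrightarrow> [lam F1 = lam F2] (mod 2^k))"

end

theory Submission
  imports Defs
begin

text \<open>
  Substituting the block embedding \<open>e\<^sub>V\<close> into the monomial of a family \<open>F\<close> of edges gives
  zero, a constant, or the monomial of the set of block patterns of the wildcard edges of \<open>F\<close>.
  Hence \<open>Q \<circ> e\<^sub>V\<close> has degree at most \<open>d\<close>, and the coefficient of a \<open>d\<close>-set \<open>H\<close> is the sum
  of \<open>\<lambda>\<^sub>F\<close> over the families \<open>F\<close> of \<open>d\<close> wildcard edges whose block patterns run bijectively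
  through \<open>H\<close>. Fix a block \<open>I\<^sub>i\<close> met by \<open>H\<close>. Moving the points of \<open>\<Union>F \<inter> I\<^sub>i\<close> increasingly
  onto any other subset of \<open>I\<^sub>i\<close> of the same size keeps \<open>F\<close> in this set of families and,
  because the blocks are intervals, preserves the order of \<open>\<Union>F\<close>; so it preserves the type of
  \<open>F\<close> and, by canonicity, \<open>\<lambda>\<^sub>F\<close> modulo \<open>2\<^sup>k\<close>. The families with \<open>|\<Union>F \<inter> I\<^sub>i| = s\<close>
  therefore contribute \<open>C(|I\<^sub>i|, s)\<close> copies of one fibre sum, and \<open>1 \<le> s \<le> d + 1\<close> makes
  \<open>C((d + 1)! 2\<^sup>k, s)\<close> divisible by \<open>2\<^sup>k\<close>.
\<close>

section \<open>Increasing relabellings of finite sets of naturals\<close>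

definition rank :: "nat set \<Rightarrow> nat \<Rightarrow> nat" where
  "rank A x = card {a\<in>A. a < x}"

text \<open>For \<open>card A = card B\<close>, the increasing bijection from \<open>A\<close> onto \<open>B\<close>, extended by the identity.\<close>

definition relabel :: "nat set \<Rightarrow> nat set \<Rightarrow> nat \<Rightarrow> nat" where
  "relabel A B x = (if x \<in> A then sorted_list_of_set B ! rank A x else x)"

lemma sorted_list_of_set_nth_less:
  assumes "finite A" "i < j" "j < card A"
  shows "sorted_list_of_set A ! i < sorted_list_of_set A ! j"
  using assms sorted_wrt_nth_less[of "(<)" "sorted_list_of_set A" i j] by simp

lemma rank_nth:
  assumes "finite A" "j < card A"
  shows "rank A (sorted_list_of_set A ! j) = j"
proof -
  let ?xs = "sorted_list_of_set A"
  have "{a\<in>A. a < ?xs ! j} = (!) ?xs ` {..<j}"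
  proof (intro set_eqI iffI)
    fix a assume a: "a \<in> {a\<in>A. a < ?xs ! j}"
    then obtain i where i: "i < card A" "a = ?xs ! i"
      using assms(1) by (metis in_set_conv_nth length_sorted_list_of_set mem_Collect_eq
          set_sorted_list_of_set)
    with a assms have "i < j"
      using sorted_list_of_set_nth_less[OF assms(1), of j i] by (metis linorder_neqE_nat
          mem_Collect_eq order.asym)
    with i show "a \<in> (!) ?xs ` {..<j}" by blast
  next
    fix a assume "a \<in> (!) ?xs ` {..<j}"
    then obtain i where "i < j" "a = ?xs ! i" by blast
    then show "a \<in> {a\<in>A. a < ?xs ! j}"
      using assms sorted_list_of_set_nth_less[OF assms(1), of i j]
      by (metis (mono_tags) mem_Collect_eq nth_mem length_sorted_list_of_set
          set_sorted_list_of_set order.strict_trans)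
  qed
  moreover have "inj_on ((!) ?xs) {..<j}"
    using assms by (intro inj_on_nth) auto
  ultimately show ?thesis
    unfolding rank_def by (simp add: card_image)
qed

lemma nth_rank:
  assumes "finite A" "x \<in> A"
  shows "rank A x < card A" "sorted_list_of_set A ! rank A x = x"
proof -
  obtain i where "i < card A" "x = sorted_list_of_set A ! i"
    using assms by (metis in_set_conv_nth length_sorted_list_of_set set_sorted_list_of_set)
  then show "rank A x < card A" "sorted_list_of_set A ! rank A x = x"
    using rank_nth[OF assms(1)] by auto
qed

lemma rank_strict_mono_on: "finite A \<Longrightarrow> strict_mono_on A (rank A)"
  unfolding rank_def by (intro strict_mono_onI psubset_card_mono) auto

lemma relabel_in:
  "finite A \<Longrightarrow> finite B \<Longrightarrow> card A = card B \<Longrightarrow> x \<in> A \<Longrightarrow> relabel A B x \<in> B"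
  unfolding relabel_def using nth_rank(1)[of A x]
  by (metis nth_mem length_sorted_list_of_set set_sorted_list_of_set)

lemma relabel_rank:
  "finite A \<Longrightarrow> finite B \<Longrightarrow> card A = card B \<Longrightarrow> x \<in> A \<Longrightarrow> rank B (relabel A B x) = rank A x"
  unfolding relabel_def using nth_rank(1)[of A x] rank_nth[of B "rank A x"] by auto

lemma relabel_strict_mono_on:
  assumes "finite A" "finite B" "card A = card B"
  shows "strict_mono_on A (relabel A B)"
proof (rule strict_mono_onI)
  fix x y assume "x \<in> A" "y \<in> A" "x < y"
  then show "relabel A B x < relabel A B y"
    unfolding relabel_def using assms nth_rank(1)[of A y] strict_mono_onD[OF rank_strict_mono_on]
      sorted_list_of_set_nth_less[of B "rank A x" "rank A y"] by auto
qed

lemma relabel_relabel: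
  assumes "finite A" "finite B" "finite C" "card A = card B" "card B = card C" "x \<in> A"
  shows "relabel B C (relabel A B x) = relabel A C x"
  using assms relabel_in[of A B x] relabel_rank[of A B x] by (simp add: relabel_def)

lemma relabel_self: "finite A \<Longrightarrow> relabel A A = id"
  unfolding relabel_def using nth_rank(2)[of A] by auto

lemma relabel_image:
  assumes "finite A" "finite B" "card A = card B"
  shows "relabel A B ` A = B"
proof -
  have "inj_on (relabel A B) A"
    using strict_mono_on_imp_inj_on[OF relabel_strict_mono_on[OF assms]] .
  moreover have "relabel A B ` A \<subseteq> B" using relabel_in[OF assms] by auto
  ultimately show ?thesis using assms by (metis card_image card_subset_eq)
qed

definition relabel_family :: "nat set \<Rightarrow> nat set \<Rightarrow> nat set set \<Rightarrow> nat set set" where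
  "relabel_family J W F = image (relabel (\<Union>F \<inter> J) W) ` F"

context
  fixes J W :: "nat set" and F :: "nat set set"
  assumes fin: "finite J" and W: "W \<subseteq> J" "card W = card (\<Union>F \<inter> J)"
begin

lemma finite_relabel_parts: "finite (\<Union>F \<inter> J)" "finite W"
  using fin W(1) finite_subset by auto

lemma relabel_image_edge:
  assumes "p \<in> F"
  shows "relabel (\<Union>F \<inter> J) W ` p - J = p - J"
    and "relabel (\<Union>F \<inter> J) W ` p \<inter> J = {} \<longleftrightarrow> p \<inter> J = {}"
proof -
  let ?\<phi> = "relabel (\<Union>F \<inter> J) W"
  have inJ: "?\<phi> z \<in> J" if "z \<in> p \<inter> J" for z
    using that assms relabel_in[of "\<Union>F \<inter> J" W z] finite_relabel_parts W by auto
  have "?\<phi> ` p = ?\<phi> ` (p \<inter> J) \<union> (p - J)"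
    by (auto simp: relabel_def)
  then show "?\<phi> ` p - J = p - J" "?\<phi> ` p \<inter> J = {} \<longleftrightarrow> p \<inter> J = {}"
    using inJ by auto
qed

lemma Union_relabel_family_inter: "\<Union>(relabel_family J W F) \<inter> J = W"
proof -
  let ?\<phi> = "relabel (\<Union>F \<inter> J) W"
  have "\<Union>(relabel_family J W F) = ?\<phi> ` (\<Union>F \<inter> J) \<union> ?\<phi> ` (\<Union>F - J)"
    unfolding relabel_family_def by auto
  also have "\<dots> = W \<union> (\<Union>F - J)"
    using relabel_image[of "\<Union>F \<inter> J" W] finite_relabel_parts W by (auto simp: relabel_def)
  finally show ?thesis using W(1) by auto
qed

lemma relabel_family_relabel_family:
  assumes "W' \<subseteq> J" "card W' = card W"
  shows "relabel_family J W' (relabel_family J W F) = relabel_family J W' F"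
proof -
  have "relabel W W' (relabel (\<Union>F \<inter> J) W x) = relabel (\<Union>F \<inter> J) W' x" if "x \<in> \<Union>F" for x
  proof (cases "x \<in> J")
    case True
    then show ?thesis
      using that relabel_relabel finite_relabel_parts W assms finite_subset[OF assms(1) fin] by simp
  next
    case False
    then show ?thesis using W(1) by (auto simp: relabel_def)
  qed
  then show ?thesis
    unfolding relabel_family_def[of J W'] Union_relabel_family_inter
    unfolding relabel_family_def image_image
    by (intro image_cong[OF refl]) blast
qed

lemma strict_mono_on_relabel:
  assumes "\<forall>z\<in>\<Union>F - J. (\<forall>w\<in>J. w < z) \<or> (\<forall>w\<in>J. z < w)"
  shows "strict_mono_on (\<Union>F) (relabel (\<Union>F \<inter> J) W)"
proof (rule strict_mono_onI)
  let ?\<phi> = "relabel (\<Union>F \<inter> J) W"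
  have in_J: "?\<phi> x \<in> J" if "x \<in> \<Union>F \<inter> J" for x
    using relabel_in[of "\<Union>F \<inter> J" W x] that finite_relabel_parts W by auto
  fix x y assume xy: "x \<in> \<Union>F" "y \<in> \<Union>F" "x < y"
  consider "x \<in> J" "y \<in> J" | "x \<in> J" "y \<notin> J" | "x \<notin> J" "y \<in> J" | "x \<notin> J" "y \<notin> J"
    by blast
  then show "?\<phi> x < ?\<phi> y"
  proof cases
    case 1
    then have "x \<in> \<Union>F \<inter> J" "y \<in> \<Union>F \<inter> J" using xy by auto
    then show ?thesis
      using strict_mono_onD[OF relabel_strict_mono_on[OF finite_relabel_parts W(2)[symmetric]]] xy(3)
      by blast
  next
    case 2
    then have "(\<forall>w\<in>J. w < y) \<or> (\<forall>w\<in>J. y < w)" using assms xy(2) by blast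
    then have "\<forall>w\<in>J. w < y" using 2 xy(3) by force
    moreover have "?\<phi> x \<in> J" using in_J 2 xy(1) by blast
    moreover have "?\<phi> y = y" using 2 by (simp add: relabel_def)
    ultimately show ?thesis by simp
  next
    case 3
    then have "(\<forall>w\<in>J. w < x) \<or> (\<forall>w\<in>J. x < w)" using assms xy(1) by blast
    then have "\<forall>w\<in>J. x < w" using 3 xy(3) by force
    moreover have "?\<phi> y \<in> J" using in_J 3 xy(2) by blast
    moreover have "?\<phi> x = x" using 3 by (simp add: relabel_def)
    ultimately show ?thesis by simp
  next
    case 4
    then show ?thesis using xy(3) by (simp add: relabel_def)
  qed
qed

end

lemma relabel_family_self:
  assumes "finite J"
  shows "relabel_family J (\<Union>F \<inter> J) F = F"
proof -
  have "finite (\<Union>F \<inter> J)" using assms by blast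
  then show ?thesis unfolding relabel_family_def relabel_self[OF \<open>finite (\<Union>F \<inter> J)\<close>] by simp
qed

lemma sorted_list_of_set_image_strict_mono_on:
  assumes "finite U" "strict_mono_on U \<phi>"
  shows "sorted_list_of_set (\<phi> ` U) = map \<phi> (sorted_list_of_set U)"
proof -
  have "sorted_wrt (<) (map \<phi> (sorted_list_of_set U))"
    unfolding sorted_wrt_map
    by (rule sorted_wrt_mono_rel[OF _ strict_sorted_list_of_set[of U]])
      (use assms in \<open>auto dest: strict_mono_onD\<close>)
  moreover have "length (map \<phi> (sorted_list_of_set U)) = card (\<phi> ` U)"
    using assms by (simp add: card_image strict_mono_on_imp_inj_on)
  ultimately show ?thesis
    using sorted_list_of_set_unique[of "\<phi> ` U" "map \<phi> (sorted_list_of_set U)"] assms by simp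
qed

lemma hj_type_image_strict_mono_on:
  assumes "finite (\<Union>F)" "strict_mono_on (\<Union>F) \<phi>"
  shows "hj_type (image \<phi> ` F) = hj_type F"
proof -
  let ?U = "\<Union>F" and ?u = "\<lambda>i. sorted_list_of_set (\<Union>F) ! (i - 1)"
  have inj: "inj_on \<phi> ?U" using strict_mono_on_imp_inj_on[OF assms(2)] .
  have card_eq: "card (\<phi> ` ?U) = card ?U" using inj by (simp add: card_image)
  have idx: "i - 1 < length (sorted_list_of_set ?U)" if "i \<in> {1..card ?U}" for i
    using that assms(1) by auto
  have "?u i \<in> ?U" if "i \<in> {1..card ?U}" for i
    using nth_mem[OF idx[OF that]] assms(1) by simp
  then have sub: "?u ` S \<subseteq> ?U" if "S \<subseteq> {1..card ?U}" for S
    using that by blast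
  have img: "(\<lambda>i. sorted_list_of_set (\<phi> ` ?U) ! (i - 1)) ` S = \<phi> ` ?u ` S"
    if "S \<subseteq> {1..card ?U}" for S
    unfolding image_image sorted_list_of_set_image_strict_mono_on[OF assms]
    using that idx by (intro image_cong) auto
  have pre: "\<phi> ` A \<in> image \<phi> ` F \<longleftrightarrow> A \<in> F" if "A \<subseteq> ?U" for A
    using that inj_on_image_Pow[OF inj] unfolding inj_on_def by blast
  have U_img: "\<Union>(image \<phi> ` F) = \<phi> ` ?U" by blast
  show ?thesis
    unfolding hj_type_def Let_def U_img card_eq
  proof (intro Collect_cong conj_cong refl)
    fix S assume "S \<subseteq> {1..card ?U}"
    then show "(\<lambda>i. sorted_list_of_set (\<phi> ` ?U) ! (i - 1)) ` S \<in> image \<phi> ` F \<longleftrightarrow> ?u ` S \<in> F"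
      using sub img pre by simp
  qed
qed

section \<open>Sums over families with equicardinal fibres\<close>

lemma dvd_choose_mult:
  fixes a b s :: nat
  assumes "1 \<le> s" "s dvd a"
  shows "b dvd (a * b choose s)"
proof -
  obtain t where t: "a = s * t" using assms(2) by blast
  have "s * (a * b choose s) = s * (t * b * (a * b - 1 choose (s - 1)))"
    using times_binomial_minus1_eq[of s "a * b"] assms(1) t by (simp add: mult_ac)
  then have "a * b choose s = t * b * (a * b - 1 choose (s - 1))" using assms(1) by simp
  then show ?thesis by simp
qed

lemma cong_sum_zero_by_equicardinal_fibres:
  fixes w :: "'a \<Rightarrow> 'b set" and f :: "'a \<Rightarrow> int" and M :: int
  assumes "finite S" "finite A" "\<And>x. x \<in> S \<Longrightarrow> w x \<subseteq> A"
    and fibre: "\<And>W W'. W \<subseteq> A \<Longrightarrow> W' \<subseteq> A \<Longrightarrow> card W = card W' \<Longrightarrow>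
      [(\<Sum>x\<in>{x\<in>S. w x = W}. f x) = (\<Sum>x\<in>{x\<in>S. w x = W'}. f x)] (mod M)"
    and dvd: "\<And>x. x \<in> S \<Longrightarrow> M dvd int (card A choose card (w x))"
  shows "[(\<Sum>x\<in>S. f x) = 0] (mod M)"
proof -
  define g where "g W = (\<Sum>x\<in>{x\<in>S. w x = W}. f x)" for W
  have "(\<Sum>x\<in>S. f x) = (\<Sum>W\<in>Pow A. g W)"
    unfolding g_def using assms(1-3) by (intro sum.group[symmetric]) auto
  also have "\<dots> = (\<Sum>s\<in>card ` Pow A. \<Sum>W\<in>{W\<in>Pow A. card W = s}. g W)"
    using assms(2) by (intro sum.group[symmetric]) auto
  finally have split: "(\<Sum>x\<in>S. f x) = (\<Sum>s\<in>card ` Pow A. \<Sum>W\<in>{W\<in>Pow A. card W = s}. g W)" .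
  have "[(\<Sum>W\<in>{W\<in>Pow A. card W = s}. g W) = 0] (mod M)" for s
  proof (cases "\<exists>x\<in>S. card (w x) = s")
    case True
    then obtain x0 where x0: "x0 \<in> S" "card (w x0) = s" by blast
    have "[(\<Sum>W\<in>{W\<in>Pow A. card W = s}. g W) = (\<Sum>W\<in>{W\<in>Pow A. card W = s}. g (w x0))] (mod M)"
      unfolding g_def using x0 assms(3) by (intro cong_sum fibre) auto
    also have "(\<Sum>W\<in>{W\<in>Pow A. card W = s}. g (w x0)) = int (card A choose s) * g (w x0)"
      using n_subsets[OF assms(2), of s] by (simp add: Pow_def)
    also have "[\<dots> = 0] (mod M)"
      using dvd[OF x0(1)] x0(2) by (simp add: cong_0_iff)
    finally show ?thesis .
  next
    case False
    then have "g W = 0" if "card W = s" for W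
      unfolding g_def using that by (intro sum.neutral) auto
    then show ?thesis by simp
  qed
  then have "[(\<Sum>x\<in>S. f x) = (\<Sum>s\<in>card ` Pow A. 0)] (mod M)"
    unfolding split by (rule cong_sum)
  then show ?thesis by simp
qed

section \<open>Composing an integer polynomial with an HJ-embedding\<close>

lemma finite_le_subsets: "finite S \<Longrightarrow> finite (le_subsets S j)"
  unfolding le_subsets_def by (rule finite_subset[of _ "Pow S"]) auto

lemma finite_edges: "finite (edges n)"
  unfolding edges_def by (intro finite_le_subsets) simp

lemma card_Int_le_of_bool:
  assumes "finite p" "card p \<le> 2"
  shows "card (p \<inter> J) \<le> 1 + of_bool (p \<subseteq> J)"
proof (cases "p \<subseteq> J")
  case False
  then have "card (p \<inter> J) < card p" using assms(1) by (intro psubset_card_mono) auto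
  then show ?thesis using assms(2) False by simp
qed (use assms(2) in \<open>simp add: Int_absorb2\<close>)

lemma edges_memD: "p \<in> edges n \<Longrightarrow> finite p \<and> p \<noteq> {} \<and> card p \<le> 2 \<and> p \<subseteq> {1..n}"
  unfolding edges_def le_subsets_def by auto

lemma sum_le_subsets_pred:
  assumes "finite S"
  shows "(\<Sum>H\<in>le_subsets S d. t H)
    = (\<Sum>H\<in>le_subsets S (d - 1). t H) + (\<Sum>H | H \<in> le_subsets S d \<and> card H = d. t H)"
proof -
  let ?T = "{H. H \<in> le_subsets S d \<and> card H = d}"
  have split: "le_subsets S d = le_subsets S (d - 1) \<union> ?T"
    unfolding le_subsets_def by auto
  have disj: "le_subsets S (d - 1) \<inter> ?T = {}"
  proof (intro equals0I)
    fix H assume "H \<in> le_subsets S (d - 1) \<inter> ?T"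
    then have "card H \<le> d - 1" "card H = d" "0 < card H"
      unfolding le_subsets_def by (auto simp: card_gt_0_iff)
    then show False by linarith
  qed
  have fin: "finite (le_subsets S (d - 1))" "finite ?T"
    using finite_le_subsets[OF assms] by auto
  show ?thesis
    by (subst split) (rule sum.union_disjoint[OF fin disj])
qed

lemma int_poly_rep_degree_pred:
  assumes rep: "int_poly_rep m k d P \<alpha> \<mu>"
    and top: "\<And>H. H \<subseteq> edges m \<Longrightarrow> card H = d \<Longrightarrow> [\<mu> H = 0] (mod 2^k)"
  shows "int_poly_rep m k (d - 1) P \<alpha> \<mu>"
  unfolding int_poly_rep_def
proof (intro allI impI)
  fix y assume y: "y \<subseteq> edges m"
  define t where "t H = \<mu> H * (if H \<subseteq> y then 1 else 0)" for H
  let ?T = "{H. H \<in> le_subsets (edges m) d \<and> card H = d}"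
  have "[t H = 0] (mod 2^k)" if "H \<in> ?T" for H
  proof -
    have "[\<mu> H = 0] (mod 2^k)" using that top unfolding le_subsets_def by blast
    then show ?thesis unfolding t_def by (metis cong_scalar_right mult_zero_left)
  qed
  then have "[(\<Sum>H\<in>?T. t H) = 0] (mod 2^k)"
    using cong_sum[of ?T t "\<lambda>_. 0"] by simp
  moreover have "(\<Sum>H\<in>le_subsets (edges m) d. t H)
      = (\<Sum>H\<in>le_subsets (edges m) (d - 1). t H) + (\<Sum>H\<in>?T. t H)"
    by (rule sum_le_subsets_pred[OF finite_edges])
  ultimately have "[(\<Sum>H\<in>le_subsets (edges m) d. t H) = (\<Sum>H\<in>le_subsets (edges m) (d - 1). t H)] (mod 2^k)"
    by (simp add: cong_add_lcancel_0)
  then have "[\<alpha> + (\<Sum>H\<in>le_subsets (edges m) d. t H) = \<alpha> + (\<Sum>H\<in>le_subsets (edges m) (d - 1). t H)] (mod 2^k)"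
    by (rule cong_add_lcancel[THEN iffD2])
  with rep y show "[P y = \<alpha> + (\<Sum>H\<in>le_subsets (edges m) (d - 1). \<mu> H * (if H \<subseteq> y then 1 else 0))] (mod 2^k)"
    unfolding int_poly_rep_def t_def by (blast intro: cong_trans)
qed

locale hj_embedding =
  fixes n m :: nat and I :: "nat \<Rightarrow> nat set" and c :: "nat set set"
  assumes data: "hj_data n m I c"
begin

definition wildcards :: "nat set" where
  "wildcards = (\<Union>i\<in>{1..m}. I i)"

definition wild_index :: "nat set \<Rightarrow> nat set" where
  "wild_index p = {i\<in>{1..m}. p \<inter> I i \<noteq> {}}"

lemma wildcard_setD: "i \<in> {1..m} \<Longrightarrow> I i \<noteq> {} \<and> I i \<subseteq> {1..n} \<and> finite (I i)"
  using data unfolding hj_data_def by (meson finite_atLeastAtMost finite_subset)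

lemma wildcard_sets_disjoint: "i \<in> {1..m} \<Longrightarrow> j \<in> {1..m} \<Longrightarrow> i \<noteq> j \<Longrightarrow> I i \<inter> I j = {}"
  using data unfolding hj_data_def by blast

lemma wildcards_subset: "wildcards \<subseteq> {1..n}"
  unfolding wildcards_def using wildcard_setD by blast

lemma wild_index_single: "i \<in> {1..m} \<Longrightarrow> p \<subseteq> I i \<Longrightarrow> p \<noteq> {} \<Longrightarrow> wild_index p = {i}"
  unfolding wild_index_def using wildcard_sets_disjoint by auto

lemma wild_index_in_edges:
  assumes "p \<in> edges n" "p \<subseteq> wildcards"
  shows "wild_index p \<in> edges m"
proof -
  have p: "finite p" "p \<noteq> {}" "card p \<le> 2" using edges_memD[OF assms(1)] by auto
  have cover: "wild_index p = (\<Union>z\<in>p. {i\<in>{1..m}. z \<in> I i})"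
    unfolding wild_index_def by auto
  have "card {i\<in>{1..m}. z \<in> I i} \<le> 1" for z
    unfolding One_nat_def using wildcard_sets_disjoint
    by (intro card_le_Suc0_iff_eq[THEN iffD2]) auto
  then have "card (wild_index p) \<le> card p"
    unfolding cover using card_UN_le[OF p(1), of "\<lambda>z. {i\<in>{1..m}. z \<in> I i}"]
    by (metis (no_types, lifting) sum_mono card_eq_sum le_trans)
  moreover have "wild_index p \<noteq> {}"
    using p(2) assms(2) unfolding wild_index_def wildcards_def by blast
  ultimately show ?thesis
    using p(3) unfolding edges_def le_subsets_def wild_index_def by auto
qed

lemma mem_hj_b_iff:
  assumes "q \<in> edges m" "p \<in> edges n"
  shows "p \<in> hj_b n I q \<longleftrightarrow> p \<subseteq> wildcards \<and> q = wild_index p"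
proof -
  have q: "q \<subseteq> {1..m}" using edges_memD[OF assms(1)] by auto
  have "p \<subseteq> (\<Union>i\<in>q. I i) \<and> (\<forall>i\<in>q. p \<inter> I i \<noteq> {}) \<longleftrightarrow> p \<subseteq> wildcards \<and> q = wild_index p"
  proof
    assume p: "p \<subseteq> (\<Union>i\<in>q. I i) \<and> (\<forall>i\<in>q. p \<inter> I i \<noteq> {})"
    have "wild_index p \<subseteq> q"
    proof
      fix i assume "i \<in> wild_index p"
      then obtain z where "z \<in> p" "z \<in> I i" "i \<in> {1..m}" unfolding wild_index_def by auto
      with p q wildcard_sets_disjoint show "i \<in> q" by blast
    qed
    with p q show "p \<subseteq> wildcards \<and> q = wild_index p"
      unfolding wildcards_def wild_index_def by blast
  next
    assume "p \<subseteq> wildcards \<and> q = wild_index p"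
    then show "p \<subseteq> (\<Union>i\<in>q. I i) \<and> (\<forall>i\<in>q. p \<inter> I i \<noteq> {})"
      unfolding wildcards_def wild_index_def by blast
  qed
  then show ?thesis using assms(2) unfolding hj_b_def by blast
qed

lemma mem_hj_emb_iff:
  assumes "y \<subseteq> edges m"
  shows "p \<in> hj_emb n I c y \<longleftrightarrow> p \<in> edges n \<and> (if p \<subseteq> wildcards then wild_index p \<in> y else p \<in> c)"
proof -
  have Id: "p \<in> hj_Id n I y \<longleftrightarrow> p \<in> edges n \<and> p \<subseteq> wildcards \<and> wild_index p \<in> y"
  proof (cases "p \<in> edges n \<and> p \<subseteq> wildcards \<and> wild_index p \<in> y")
    case True
    then have "{q \<in> y. p \<in> hj_b n I q} = {wild_index p}" using mem_hj_b_iff assms by auto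
    then show ?thesis using True unfolding hj_Id_def by simp
  next
    case False
    show ?thesis
    proof (cases "p \<in> edges n")
      case True
      then have "{q \<in> y. p \<in> hj_b n I q} = {}" using False mem_hj_b_iff assms by auto
      then have "card {q \<in> y. p \<in> hj_b n I q} = 0" by (simp only: card.empty)
      then show ?thesis using False unfolding hj_Id_def by simp
    qed (simp add: hj_Id_def)
  qed
  have "c \<subseteq> edges n" "p \<in> c \<Longrightarrow> \<not> p \<subseteq> wildcards"
    using data unfolding hj_data_def wildcards_def le_subsets_def edges_def by blast+
  with Id show ?thesis unfolding hj_emb_def by auto
qed

lemma hj_emb_subset_edges: "hj_emb n I c y \<subseteq> edges n"
  using data unfolding hj_emb_def hj_Id_def hj_data_def by auto

definition c_compatible :: "nat set set \<Rightarrow> bool" where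
  "c_compatible F \<longleftrightarrow> (\<forall>p\<in>F. \<not> p \<subseteq> wildcards \<longrightarrow> p \<in> c)"

definition wild_trace :: "nat set set \<Rightarrow> nat set set" where
  "wild_trace F = wild_index ` {p\<in>F. p \<subseteq> wildcards}"

definition comp_coeff :: "nat \<Rightarrow> (nat set set \<Rightarrow> int) \<Rightarrow> nat set set \<Rightarrow> int" where
  "comp_coeff d lam H = (\<Sum>F | F \<in> le_subsets (edges n) d \<and> wild_trace F = H \<and> c_compatible F. lam F)"

lemma subset_hj_emb_iff:
  assumes "y \<subseteq> edges m" "F \<subseteq> edges n"
  shows "F \<subseteq> hj_emb n I c y \<longleftrightarrow> c_compatible F \<and> wild_trace F \<subseteq> y"
proof -
  have "F \<subseteq> hj_emb n I c y \<longleftrightarrow> (\<forall>p\<in>F. if p \<subseteq> wildcards then wild_index p \<in> y else p \<in> c)"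
    using assms(2) mem_hj_emb_iff[OF assms(1)] by blast
  also have "\<dots> \<longleftrightarrow> c_compatible F \<and> wild_trace F \<subseteq> y"
    unfolding c_compatible_def wild_trace_def image_subset_iff
    by (simp add: if_bool_eq_conj ball_conj_distrib conj_commute Ball_def imp_conjL)
  finally show ?thesis .
qed

lemma wild_trace_mem_le_subsets:
  assumes "F \<in> le_subsets (edges n) d"
  shows "wild_trace F \<in> insert {} (le_subsets (edges m) d)"
proof -
  have F: "finite F" "card F \<le> d" "F \<subseteq> edges n" using assms unfolding le_subsets_def by auto
  have "card (wild_trace F) \<le> card {p\<in>F. p \<subseteq> wildcards}"
    unfolding wild_trace_def using F(1) by (intro card_image_le) simp
  also have "\<dots> \<le> card F" using F(1) by (intro card_mono) auto
  moreover have "wild_trace F \<subseteq> edges m"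
    unfolding wild_trace_def using F(3) wild_index_in_edges by auto
  ultimately show ?thesis
    using F finite_subset[OF _ finite_edges] unfolding le_subsets_def by auto
qed

lemma sum_subset_hj_emb:
  assumes y: "y \<subseteq> edges m"
  shows "(\<Sum>F\<in>le_subsets (edges n) d. lam F * (if F \<subseteq> hj_emb n I c y then 1 else 0))
    = comp_coeff d lam {} + (\<Sum>H\<in>le_subsets (edges m) d. comp_coeff d lam H * (if H \<subseteq> y then 1 else 0))"
proof -
  let ?L = "le_subsets (edges n) d" and ?P = "le_subsets (edges m) d"
  define t where "t F = (if c_compatible F then lam F else 0)" for F
  have "(\<Sum>F\<in>?L. lam F * (if F \<subseteq> hj_emb n I c y then 1 else 0))
      = (\<Sum>F\<in>?L. t F * (if wild_trace F \<subseteq> y then 1 else 0))"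
    using subset_hj_emb_iff[OF y] unfolding t_def le_subsets_def by (intro sum.cong) auto
  also have "\<dots> = (\<Sum>H\<in>insert {} ?P. \<Sum>F | F \<in> ?L \<and> wild_trace F = H.
      t F * (if wild_trace F \<subseteq> y then 1 else 0))"
    using wild_trace_mem_le_subsets finite_le_subsets[OF finite_edges]
    by (intro sum.group[symmetric]) auto
  also have "\<dots> = (\<Sum>H\<in>insert {} ?P. comp_coeff d lam H * (if H \<subseteq> y then 1 else 0))"
  proof (intro sum.cong refl)
    fix H
    have fin: "finite {F. F \<in> ?L \<and> wild_trace F = H}"
      using finite_le_subsets[OF finite_edges] by simp
    have filter: "{F. F \<in> ?L \<and> wild_trace F = H \<and> c_compatible F}
        = {F \<in> {F. F \<in> ?L \<and> wild_trace F = H}. c_compatible F}" by blast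
    have "(\<Sum>F | F \<in> ?L \<and> wild_trace F = H. t F) = comp_coeff d lam H"
      unfolding comp_coeff_def t_def by (simp only: filter sum.inter_filter[OF fin])
    then show "(\<Sum>F | F \<in> ?L \<and> wild_trace F = H. t F * (if wild_trace F \<subseteq> y then 1 else 0))
        = comp_coeff d lam H * (if H \<subseteq> y then 1 else 0)"
      by (simp add: sum_distrib_right)
  qed
  also have "\<dots> = comp_coeff d lam {} + (\<Sum>H\<in>?P. comp_coeff d lam H * (if H \<subseteq> y then 1 else 0))"
    using finite_le_subsets[OF finite_edges] by (simp add: le_subsets_def)
  finally show ?thesis .
qed

lemma int_poly_rep_comp_hj_emb:
  assumes rep: "int_poly_rep n k d Q \<alpha> lam"
  shows "int_poly_rep m k d (Q \<circ> hj_emb n I c) (\<alpha> + comp_coeff d lam {}) (comp_coeff d lam)"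
  unfolding int_poly_rep_def
proof (intro allI impI)
  fix y assume y: "y \<subseteq> edges m"
  have "[Q (hj_emb n I c y) = \<alpha> + (\<Sum>F\<in>le_subsets (edges n) d.
      lam F * (if F \<subseteq> hj_emb n I c y then 1 else 0))] (mod 2^k)"
    using rep hj_emb_subset_edges unfolding int_poly_rep_def by blast
  then show "[(Q \<circ> hj_emb n I c) y = \<alpha> + comp_coeff d lam {}
      + (\<Sum>H\<in>le_subsets (edges m) d. comp_coeff d lam H * (if H \<subseteq> y then 1 else 0))] (mod 2^k)"
    unfolding sum_subset_hj_emb[OF y] by (simp add: add.assoc)
qed

section \<open>The top coefficients vanish\<close>

definition wild_faces :: "nat \<Rightarrow> nat set set \<Rightarrow> nat set set set" where
  "wild_faces d H = {F. F \<subseteq> edges n \<and> (\<forall>p\<in>F. p \<subseteq> wildcards) \<and> wild_index ` F = H \<and> card F = d}"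

lemma finite_wild_faces: "finite (wild_faces d H)"
  unfolding wild_faces_def by (rule finite_subset[of _ "Pow (edges n)"]) (auto simp: finite_edges)

lemma finite_Union_wild_faces: "F \<in> wild_faces d H \<Longrightarrow> finite (\<Union>F)"
proof -
  assume "F \<in> wild_faces d H"
  then have "F \<subseteq> edges n" unfolding wild_faces_def by blast
  then have "finite F" "\<And>p. p \<in> F \<Longrightarrow> finite p"
    using finite_subset[OF _ finite_edges] edges_memD by blast+
  then show "finite (\<Union>F)" by (rule finite_Union)
qed

lemma wild_faces_subset_le_subsets:
  assumes "1 \<le> d" "wildcards \<subseteq> X"
  shows "wild_faces d H \<subseteq> le_subsets (le_subsets X 2) d"
proof
  fix F assume F: "F \<in> wild_faces d H"
  then have "F \<subseteq> le_subsets X 2"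
    using assms(2) edges_memD unfolding wild_faces_def le_subsets_def by blast
  moreover have "finite F" "F \<noteq> {}" using F assms(1) unfolding wild_faces_def
    by (auto intro: finite_subset[OF _ finite_edges])
  ultimately show "F \<in> le_subsets (le_subsets X 2) d"
    using F unfolding wild_faces_def le_subsets_def by auto
qed

lemma comp_coeff_eq_sum_wild_faces:
  assumes "1 \<le> d" "card H = d"
  shows "comp_coeff d lam H = (\<Sum>F\<in>wild_faces d H. lam F)"
proof -
  have "{F. F \<in> le_subsets (edges n) d \<and> wild_trace F = H \<and> c_compatible F} = wild_faces d H"
  proof (intro set_eqI iffI)
    fix F assume "F \<in> {F. F \<in> le_subsets (edges n) d \<and> wild_trace F = H \<and> c_compatible F}"
    then have F: "F \<in> le_subsets (edges n) d" "wild_index ` {p\<in>F. p \<subseteq> wildcards} = H"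
      unfolding wild_trace_def by auto
    let ?F' = "{p\<in>F. p \<subseteq> wildcards}"
    have fin: "finite F" "card F \<le> d" using F(1) unfolding le_subsets_def by auto
    have sub: "?F' \<subseteq> F" by blast
    have "d \<le> card ?F'" using card_image_le[of ?F' wild_index] F(2) fin assms(2) by simp
    moreover have "card ?F' \<le> card F" using fin(1) sub by (rule card_mono)
    ultimately have card_F: "card F = d" and "card ?F' = card F" using fin(2) by linarith+
    then have "?F' = F" by (intro card_subset_eq[OF fin(1) sub])
    then have "\<forall>p\<in>F. p \<subseteq> wildcards" "wild_index ` F = H" using F(2) by auto
    moreover have "F \<subseteq> edges n" using F(1) unfolding le_subsets_def by blast
    ultimately show "F \<in> wild_faces d H" using card_F unfolding wild_faces_def by blast
  next
    fix F assume F: "F \<in> wild_faces d H"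
    then have "{p\<in>F. p \<subseteq> wildcards} = F" unfolding wild_faces_def by blast
    then show "F \<in> {F. F \<in> le_subsets (edges n) d \<and> wild_trace F = H \<and> c_compatible F}"
      using F wild_faces_subset_le_subsets[OF assms(1), of wildcards] edges_memD
      unfolding wild_faces_def wild_trace_def c_compatible_def le_subsets_def by auto
  qed
  then show ?thesis unfolding comp_coeff_def by simp
qed

lemma wild_index_eq:
  assumes "i0 \<in> {1..m}" "p' - I i0 = p - I i0" "p' \<inter> I i0 = {} \<longleftrightarrow> p \<inter> I i0 = {}"
  shows "wild_index p' = wild_index p"
proof -
  have "p' \<inter> I i \<noteq> {} \<longleftrightarrow> p \<inter> I i \<noteq> {}" if "i \<in> {1..m}" for i
  proof (cases "i = i0")
    case False
    then have "I i \<inter> I i0 = {}" using wildcard_sets_disjoint that assms(1) by blast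
    then have "p' \<inter> I i = (p' - I i0) \<inter> I i" "p \<inter> I i = (p - I i0) \<inter> I i" by blast+
    then show ?thesis using assms(2) by simp
  qed (use assms(3) in simp)
  then show ?thesis unfolding wild_index_def by blast
qed

lemma wild_faces_at_most_one_inside:
  assumes F: "F \<in> wild_faces d H" and "card H = d" and i0: "i0 \<in> {1..m}"
  shows "card (F \<inter> {p. p \<subseteq> I i0}) \<le> 1"
proof -
  have F': "F \<subseteq> edges n" "wild_index ` F = H" "card F = d"
    using F unfolding wild_faces_def by auto
  have finF: "finite F" using F'(1) finite_subset finite_edges by blast
  have inj: "inj_on wild_index F"
    by (intro eq_card_imp_inj_on[OF finF]) (simp add: F'(2,3) assms(2))
  show ?thesis
    unfolding One_nat_def
  proof (intro card_le_Suc0_iff_eq[THEN iffD2] ballI)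
    fix p p' assume pp': "p \<in> F \<inter> {p. p \<subseteq> I i0}" "p' \<in> F \<inter> {p. p \<subseteq> I i0}"
    then have "p \<noteq> {}" "p' \<noteq> {}" using edges_memD F'(1) by blast+
    then have "wild_index p = wild_index p'" using pp' wild_index_single[OF i0] by simp
    then show "p = p'" using inj_onD[OF inj] pp' by blast
  qed (use finF in simp)
qed

lemma card_Union_inter_wild_faces_bounds:
  assumes F: "F \<in> wild_faces d H" and "card H = d" "q \<in> H" "i0 \<in> q"
  shows "1 \<le> card (\<Union>F \<inter> I i0)" "card (\<Union>F \<inter> I i0) \<le> d + 1"
proof -
  let ?J = "I i0"
  have F': "F \<subseteq> edges n" "wild_index ` F = H" "card F = d"
    using F unfolding wild_faces_def by auto
  have finF: "finite F" using F'(1) finite_subset finite_edges by blast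
  obtain p0 where p0: "p0 \<in> F" "wild_index p0 = q" using F'(2) assms(3) by blast
  then have i0: "i0 \<in> {1..m}" "p0 \<inter> ?J \<noteq> {}" using assms(4) unfolding wild_index_def by auto
  have "finite ?J" using wildcard_setD[OF i0(1)] by blast
  then show "1 \<le> card (\<Union>F \<inter> ?J)"
    using p0(1) i0(2) by (simp add: Suc_le_eq card_gt_0_iff) blast
  have cover: "\<Union>F \<inter> ?J = (\<Union>p\<in>F. p \<inter> ?J)" by blast
  have "card (\<Union>F \<inter> ?J) \<le> (\<Sum>p\<in>F. card (p \<inter> ?J))"
    unfolding cover by (rule card_UN_le[OF finF])
  also have "\<dots> \<le> (\<Sum>p\<in>F. 1 + of_bool (p \<subseteq> ?J))"
    using edges_memD F'(1) by (intro sum_mono card_Int_le_of_bool) blast+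
  also have "\<dots> = card F + card (F \<inter> {p. p \<subseteq> ?J})"
    using finF by (subst sum.distrib) simp
  also have "\<dots> \<le> d + 1"
    using wild_faces_at_most_one_inside[OF F assms(2) i0(1)] F'(3) by simp
  finally show "card (\<Union>F \<inter> ?J) \<le> d + 1" .
qed

end

locale block_hj_embedding =
  fixes n m :: nat and I :: "nat \<Rightarrow> nat set" and c :: "nat set set"
  assumes block: "hj_block n m I c"

sublocale block_hj_embedding \<subseteq> hj_embedding
  using block unfolding hj_block_def by unfold_locales blast

context block_hj_embedding
begin

lemma Max_less_Min:
  assumes "1 \<le> i" "i < j" "j \<le> m"
  shows "Max (I i) < Min (I j)"
  using assms(2,3)
proof (induction j)
  case (Suc j)
  have step: "Max (I j) < Min (I (Suc j))" if "1 \<le> j"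
    using block Suc.prems that unfolding hj_block_def by auto
  show ?case
  proof (cases "i = j")
    case False
    then have "i < j" "j \<in> {1..m}" using Suc.prems assms(1) by auto
    then have "Max (I i) < Min (I j)" using Suc.IH Suc.prems by auto
    moreover have "Min (I j) \<le> Max (I j)"
      using wildcard_setD[OF \<open>j \<in> {1..m}\<close>] by (meson Max_ge Min_in)
    ultimately show ?thesis using step \<open>i < j\<close> assms(1) by fastforce
  qed (use step assms(1) in simp)
qed simp

lemma wildcards_outside_block:
  assumes i: "i \<in> {1..m}" and z: "z \<in> wildcards - I i"
  shows "(\<forall>w\<in>I i. w < z) \<or> (\<forall>w\<in>I i. z < w)"
proof -
  obtain j where j: "j \<in> {1..m}" "z \<in> I j" "j \<noteq> i" using z unfolding wildcards_def by blast
  have fin: "finite (I i)" "finite (I j)" using wildcard_setD i j(1) by blast+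
  consider "i < j" | "j < i" using j(3) by linarith
  then show ?thesis
  proof cases
    case 1
    then have "Max (I i) < Min (I j)" using Max_less_Min i j(1) by auto
    then have "\<forall>w\<in>I i. w < z" using fin j(2) Max_ge Min_le by (meson le_less_trans less_le_trans)
    then show ?thesis ..
  next
    case 2
    then have "Max (I j) < Min (I i)" using Max_less_Min i j(1) by auto
    then have "\<forall>w\<in>I i. z < w" using fin j(2) Max_ge Min_le by (meson le_less_trans less_le_trans)
    then show ?thesis ..
  qed
qed

lemma relabel_family_wild_faces:
  assumes F: "F \<in> wild_faces d H" and i0: "i0 \<in> {1..m}"
    and W: "W \<subseteq> I i0" "card W = card (\<Union>F \<inter> I i0)"
  shows "strict_mono_on (\<Union>F) (relabel (\<Union>F \<inter> I i0) W)"
    and "relabel_family (I i0) W F \<in> wild_faces d H"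
proof -
  let ?\<phi> = "relabel (\<Union>F \<inter> I i0) W"
  have finJ: "finite (I i0)" "I i0 \<subseteq> wildcards"
    using wildcard_setD i0 unfolding wildcards_def by blast+
  have F': "F \<subseteq> edges n" "\<forall>p\<in>F. p \<subseteq> wildcards" "wild_index ` F = H" "card F = d"
    using F unfolding wild_faces_def by auto
  show mono: "strict_mono_on (\<Union>F) ?\<phi>"
    using strict_mono_on_relabel[OF finJ(1) W] wildcards_outside_block[OF i0] F'(2) by blast
  have edge: "?\<phi> ` p \<in> edges n" "?\<phi> ` p \<subseteq> wildcards" "wild_index (?\<phi> ` p) = wild_index p"
    if p: "p \<in> F" for p
  proof -
    note img = relabel_image_edge[OF finJ(1) W p]
    show wild: "?\<phi> ` p \<subseteq> wildcards"
      using img(1) finJ(2) F'(2) p by blast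
    have "finite p" "p \<noteq> {}" "card p \<le> 2" using edges_memD F'(1) p by blast+
    then show "?\<phi> ` p \<in> edges n"
      using wild wildcards_subset card_image_le[of p ?\<phi>]
      unfolding edges_def le_subsets_def by auto
    show "wild_index (?\<phi> ` p) = wild_index p"
      using wild_index_eq[OF i0 img] .
  qed
  have "(\<lambda>p. wild_index (?\<phi> ` p)) ` F = wild_index ` F"
    by (rule image_cong[OF refl edge(3)])
  then have index: "wild_index ` relabel_family (I i0) W F = H"
    unfolding relabel_family_def image_image using F'(3) by simp
  have "inj_on (image ?\<phi>) F"
    using inj_on_image_Pow[OF strict_mono_on_imp_inj_on[OF mono]] by (rule inj_on_subset) auto
  then have "card (relabel_family (I i0) W F) = d"
    unfolding relabel_family_def using card_image F'(4) by metis
  with index edge(1,2) show "relabel_family (I i0) W F \<in> wild_faces d H"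
    unfolding wild_faces_def relabel_family_def by auto
qed

lemma relabel_family_fibre:
  assumes i0: "i0 \<in> {1..m}" and F: "F \<in> wild_faces d H" "\<Union>F \<inter> I i0 = V"
    and V: "V \<subseteq> I i0" "V' \<subseteq> I i0" "card V = card V'"
  shows "relabel_family (I i0) V' F \<in> wild_faces d H"
    and "\<Union>(relabel_family (I i0) V' F) \<inter> I i0 = V'"
    and "relabel_family (I i0) V (relabel_family (I i0) V' F) = F"
proof -
  have finJ: "finite (I i0)" using wildcard_setD[OF i0] by blast
  have card_V': "card V' = card (\<Union>F \<inter> I i0)" using F(2) V(3) by simp
  show "relabel_family (I i0) V' F \<in> wild_faces d H"
    using relabel_family_wild_faces(2)[OF F(1) i0 V(2) card_V'] .
  show "\<Union>(relabel_family (I i0) V' F) \<inter> I i0 = V'"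
    using Union_relabel_family_inter[OF finJ V(2) card_V'] .
  have "relabel_family (I i0) V (relabel_family (I i0) V' F) = relabel_family (I i0) V F"
    using relabel_family_relabel_family[OF finJ V(2) card_V' V(1)] V(3) by simp
  then show "relabel_family (I i0) V (relabel_family (I i0) V' F) = F"
    using relabel_family_self[OF finJ, of F] F(2) by simp
qed

lemma canonical_relabel_family_cong:
  assumes can: "canonical_in k d X lam" and "1 \<le> d" "wildcards \<subseteq> X" and i0: "i0 \<in> {1..m}"
    and F: "F \<in> wild_faces d H" and W: "W \<subseteq> I i0" "card W = card (\<Union>F \<inter> I i0)"
  shows "[lam (relabel_family (I i0) W F) = lam F] (mod 2^k)"
proof -
  have "hj_type (relabel_family (I i0) W F) = hj_type F"
    unfolding relabel_family_def
    using hj_type_image_strict_mono_on[OF finite_Union_wild_faces[OF F]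
        relabel_family_wild_faces(1)[OF F i0 W]] .
  moreover have "F \<in> le_subsets (le_subsets X 2) d"
    and "relabel_family (I i0) W F \<in> le_subsets (le_subsets X 2) d"
    using wild_faces_subset_le_subsets[OF assms(2,3)] F relabel_family_wild_faces(2)[OF F i0 W]
    by blast+
  ultimately show ?thesis using can unfolding canonical_in_def by blast
qed

lemma sum_wild_faces_fibre_cong:
  assumes can: "canonical_in k d X lam" and "1 \<le> d" "wildcards \<subseteq> X" and i0: "i0 \<in> {1..m}"
    and W: "W \<subseteq> I i0" "W' \<subseteq> I i0" "card W = card W'"
  shows "[(\<Sum>F\<in>{F\<in>wild_faces d H. \<Union>F \<inter> I i0 = W}. lam F)
        = (\<Sum>F\<in>{F\<in>wild_faces d H. \<Union>F \<inter> I i0 = W'}. lam F)] (mod 2^k)"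
proof -
  let ?fibre = "\<lambda>V. {F\<in>wild_faces d H. \<Union>F \<inter> I i0 = V}"
  note fibre = relabel_family_fibre[OF i0]
  have bij: "bij_betw (relabel_family (I i0) W') (?fibre W) (?fibre W')"
  proof (rule bij_betw_byWitness[where f' = "relabel_family (I i0) W"])
    show "\<forall>F\<in>?fibre W. relabel_family (I i0) W (relabel_family (I i0) W' F) = F"
      using fibre(3)[OF _ _ W] by blast
    show "\<forall>F\<in>?fibre W'. relabel_family (I i0) W' (relabel_family (I i0) W F) = F"
      using fibre(3)[OF _ _ W(2,1) W(3)[symmetric]] by blast
    show "relabel_family (I i0) W' ` ?fibre W \<subseteq> ?fibre W'"
      using fibre(1,2)[OF _ _ W] by blast
    show "relabel_family (I i0) W ` ?fibre W' \<subseteq> ?fibre W"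
      using fibre(1,2)[OF _ _ W(2,1) W(3)[symmetric]] by blast
  qed
  have "[lam (relabel_family (I i0) W' F) = lam F] (mod 2^k)" if "F \<in> ?fibre W" for F
    using that W canonical_relabel_family_cong[OF assms(1-4), where F = F and W = W'] by auto
  then have "[(\<Sum>F\<in>?fibre W. lam (relabel_family (I i0) W' F)) = (\<Sum>F\<in>?fibre W. lam F)] (mod 2^k)"
    by (rule cong_sum)
  moreover have "(\<Sum>F\<in>?fibre W. lam (relabel_family (I i0) W' F)) = (\<Sum>F\<in>?fibre W'. lam F)"
    using sum.reindex_bij_betw[OF bij] .
  ultimately show ?thesis by (simp add: cong_sym)
qed

lemma comp_coeff_top_cong_0:
  assumes can: "canonical_in k d X lam" and d: "1 \<le> d"
    and sizes: "\<forall>i\<in>{1..m}. I i \<subseteq> X \<and> card (I i) = fact (d + 1) * 2 ^ k"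
    and H: "H \<subseteq> edges m" "card H = d"
  shows "[comp_coeff d lam H = 0] (mod 2^k)"
proof -
  obtain q where q: "q \<in> H" using H(2) d by fastforce
  then obtain i0 where i0: "i0 \<in> q" "i0 \<in> {1..m}" using H(1) edges_memD by blast
  have X: "wildcards \<subseteq> X" using sizes unfolding wildcards_def by blast
  have "[(\<Sum>F\<in>wild_faces d H. lam F) = 0] (mod 2^k)"
  proof (rule cong_sum_zero_by_equicardinal_fibres[where A = "I i0" and w = "\<lambda>F. \<Union>F \<inter> I i0"])
    show "finite (I i0)" using wildcard_setD[OF i0(2)] by blast
  next
    fix F assume F: "F \<in> wild_faces d H"
    let ?s = "card (\<Union>F \<inter> I i0)"
    have s: "1 \<le> ?s" "?s \<le> d + 1" using card_Union_inter_wild_faces_bounds[OF F H(2) q i0(1)] by auto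
    then have "2 ^ k dvd (fact (d + 1) * 2 ^ k choose ?s)"
      by (intro dvd_choose_mult dvd_fact)
    then show "2 ^ k dvd int (card (I i0) choose ?s)"
      using sizes i0(2) by (metis of_nat_dvd_iff of_nat_numeral of_nat_power)
  qed (use finite_wild_faces sum_wild_faces_fibre_cong[OF can d X i0(2)] in auto)
  then show ?thesis using comp_coeff_eq_sum_wild_faces[OF d H(2)] by simp
qed

end

theorem lemma5p10:
  fixes n k m d :: nat and X :: "nat set" and Q :: "nat set set \<Rightarrow> int"
    and \<alpha> :: int and lam :: "nat set set \<Rightarrow> int"
    and I :: "nat \<Rightarrow> nat set" and c :: "nat set set"
  assumes "0 < n" and "0 < k"
    and "X \<noteq> {}" and "X \<subseteq> {1..n}"
    and "int_poly_deg n k Q = d" and "1 \<le> d"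
    and "int_poly_rep n k d Q \<alpha> lam"
    and "hj_block n m I c"
    and "canonical_in k d X lam"
    and "\<forall>i\<in>{1..m}. I i \<subseteq> X \<and> card (I i) = fact (d + 1) * 2 ^ k"
  shows "int_poly_deg m k (Q \<circ> hj_emb n I c) < d"
proof -
  interpret block_hj_embedding n m I c
    using assms(8) by unfold_locales
  have "int_poly_rep m k (d - 1) (Q \<circ> hj_emb n I c) (\<alpha> + comp_coeff d lam {}) (comp_coeff d lam)"
    using int_poly_rep_degree_pred[OF int_poly_rep_comp_hj_emb[OF assms(7)]]
      comp_coeff_top_cong_0[OF assms(9,6,10)] by blast
  then have "int_poly_deg m k (Q \<circ> hj_emb n I c) \<le> d - 1"
    unfolding int_poly_deg_def is_int_poly_def by (blast intro: Least_le)
  with assms(6) show ?thesis by linarith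
qed

end
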